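(* In the Byblos protocol described in the context, if a correct server decides to commit or to cancel a transaction, then every correct server eventually makes the same decision for that transaction.
   Context: Byblos protocol. There are $n=4f+1$ servers, at most $f$ Byzantine, the rest correct. Clients are not Byzantine (may crash). Messages between correct parties are eventually delivered, FIFO, authenticated; client messages are signed and unforgeable. Each correct server keeps sets $\mathit{committed}$, $\mathit{cancelled}$, $\mathit{resolving}$ among other state. A server decides to commit (resp. cancel) a transaction $T$ by adding it to $\mathit{committed}$ (resp. $\mathit{cancelled}$), which happens only as the outcome of a resolution of $T$: the server sends $\mathrm{StartResolution}(T,\mathit{code})$ to all servers and runs an off-the-shelf binary Byzantine consensus instance for $T$ with input $1$ (COMMIT) or $0$ (CANCEL); the consensus satisfies agreement (no two correct servers decide differently) and validity, and all correct servers participate in it (a correct server joins a resolution of $T$ upon receiving the client's Confirm for $T$, upon receiving $\mathrm{StartResolution}(T,\mathrm{COMMIT})$, upon receiving $\mathrm{StartResolution}(T,\mathrm{CANCEL})$ from $f+1$ distinct servers, or upon expiry of a timer for a pending set containing $T$); decision $1$ adds $T$ to $\mathit{committed}$ and decision $0$ adds $T$ to $\mathit{cancelled}$. *)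

theory Defs
  imports Main
begin

text \<open>Abstract model of a Byblos execution, restricted to what concerns
  the resolution of transactions.
  For each server s, time t, transaction T:
  - committed s t / cancelled s t : the server's sets committed / cancelled at time t;
  - joined s t : the transactions whose resolution (consensus instance) s has joined by time t;
  - inp s T : the input (True = COMMIT = 1, False = CANCEL = 0) with which s runs
    the consensus instance for T;
  - dec s t T : the decision of the consensus instance for T at s by time t
    (None = not yet decided, Some True = 1, Some False = 0).\<close>

definition byblos_execution ::
  "nat \<Rightarrow> nat \<Rightarrow> 's set \<Rightarrow> 's set
   \<Rightarrow> ('s \<Rightarrow> nat \<Rightarrow> 't set) \<Rightarrow> ('s \<Rightarrow> nat \<Rightarrow> 't set)
   \<Rightarrow> ('s \<Rightarrow> nat \<Rightarrow> 't set) \<Rightarrow> ('s \<Rightarrow> 't \<Rightarrow> bool)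
   \<Rightarrow> ('s \<Rightarrow> nat \<Rightarrow> 't \<Rightarrow> bool option) \<Rightarrow> bool" where
  "byblos_execution n f Servers Correct committed cancelled joined inp dec \<longleftrightarrow>
     \<comment> \<open>n = 4f+1 servers, at most f Byzantine, the rest correct\<close>
     finite Servers \<and> card Servers = n \<and> n = 4 * f + 1 \<and>
     Correct \<subseteq> Servers \<and> card (Servers - Correct) \<le> f \<and>
     \<comment> \<open>joining a resolution and consensus decisions are permanent\<close>
     (\<forall>s\<in>Correct. \<forall>t t' T. t \<le> t' \<longrightarrow> T \<in> joined s t \<longrightarrow> T \<in> joined s t') \<and>
     (\<forall>s\<in>Correct. \<forall>t t' T b. t \<le> t' \<longrightarrow> dec s t T = Some b \<longrightarrow> dec s t' T = Some b) \<and>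
     \<comment> \<open>a correct server decides only as participant of the resolution of T\<close>
     (\<forall>s\<in>Correct. \<forall>t T. dec s t T \<noteq> None \<longrightarrow> T \<in> joined s t) \<and>
     \<comment> \<open>T enters committed / cancelled exactly as outcome of the resolution:
         decision 1 adds T to committed, decision 0 adds T to cancelled\<close>
     (\<forall>s\<in>Correct. \<forall>t T. T \<in> committed s t \<longleftrightarrow> dec s t T = Some True) \<and>
     (\<forall>s\<in>Correct. \<forall>t T. T \<in> cancelled s t \<longleftrightarrow> dec s t T = Some False) \<and>
     \<comment> \<open>all correct servers participate in a resolution run by a correct server\<close>
     (\<forall>s\<in>Correct. \<forall>t T. T \<in> joined s t \<longrightarrow> (\<forall>r\<in>Correct. \<exists>t'. T \<in> joined r t')) \<and>
     \<comment> \<open>consensus agreement\<close>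
     (\<forall>s\<in>Correct. \<forall>r\<in>Correct. \<forall>t t' T b b'.
        dec s t T = Some b \<longrightarrow> dec r t' T = Some b' \<longrightarrow> b = b') \<and>
     \<comment> \<open>consensus validity\<close>
     (\<forall>T b. (\<forall>s\<in>Correct. inp s T = b) \<longrightarrow>
        (\<forall>s\<in>Correct. \<forall>t b'. dec s t T = Some b' \<longrightarrow> b' = b)) \<and>
     \<comment> \<open>consensus termination: if all correct servers participate, all correct servers decide\<close>
     (\<forall>T. (\<forall>r\<in>Correct. \<exists>t. T \<in> joined r t) \<longrightarrow> (\<forall>r\<in>Correct. \<exists>t. dec r t T \<noteq> None))"

end

theory Submission
  imports Defs
begin

text \<open>A correct server decides only inside the resolution of T, which it must
  have joined; then every correct server joins it, so by consensus termination every
  correct server decides, and by consensus agreement all on the same value.\<close>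

lemma byblos_decision_propagates:
  assumes exec: "byblos_execution n f Servers Correct committed cancelled joined inp dec"
    and s: "s \<in> Correct" and r: "r \<in> Correct"
    and decided: "dec s t T = Some b"
  shows "\<exists>t'. dec r t' T = Some b"
proof -
  note exec_def = exec[unfolded byblos_execution_def]
  have decides_when_joined: "\<forall>q\<in>Correct. \<forall>t T. dec q t T \<noteq> None \<longrightarrow> T \<in> joined q t"
    using exec_def by (elim conjE) assumption
  have all_join: "\<forall>q\<in>Correct. \<forall>t T. T \<in> joined q t \<longrightarrow> (\<forall>p\<in>Correct. \<exists>t'. T \<in> joined p t')"
    using exec_def by (elim conjE) assumption
  have agreement: "\<forall>q\<in>Correct. \<forall>p\<in>Correct. \<forall>t t' T b b'.
        dec q t T = Some b \<longrightarrow> dec p t' T = Some b' \<longrightarrow> b = b'"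
    using exec_def by (elim conjE) assumption
  have eventual_decision: "\<forall>T. (\<forall>p\<in>Correct. \<exists>t. T \<in> joined p t) \<longrightarrow> (\<forall>p\<in>Correct. \<exists>t. dec p t T \<noteq> None)"
    using exec_def by (elim conjE) assumption
  have "T \<in> joined s t" using decides_when_joined s decided by simp
  then have "\<forall>p\<in>Correct. \<exists>t'. T \<in> joined p t'" using all_join s by blast
  then obtain t' b' where decided': "dec r t' T = Some b'" using eventual_decision r by blast
  moreover have "b' = b" using agreement s r decided decided' by metis
  ultimately show ?thesis by blast
qed

theorem lemma6:
  assumes "byblos_execution n f Servers Correct committed cancelled joined inp dec"
    and "s \<in> Correct"
  shows "(T \<in> committed s t \<longrightarrow> (\<forall>r\<in>Correct. \<exists>t'. T \<in> committed r t')) \<and>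
         (T \<in> cancelled s t \<longrightarrow> (\<forall>r\<in>Correct. \<exists>t'. T \<in> cancelled r t'))"
proof -
  have committed_iff: "\<And>q t. q \<in> Correct \<Longrightarrow> T \<in> committed q t \<longleftrightarrow> dec q t T = Some True"
   and cancelled_iff: "\<And>q t. q \<in> Correct \<Longrightarrow> T \<in> cancelled q t \<longleftrightarrow> dec q t T = Some False"
    using assms(1) unfolding byblos_execution_def by simp_all
  show ?thesis
  proof (intro conjI impI ballI)
    fix r assume "T \<in> committed s t" and r: "r \<in> Correct"
    then have "dec s t T = Some True" using committed_iff assms(2) by blast
    then obtain t' where "dec r t' T = Some True"
      using byblos_decision_propagates[OF assms r] by blast
    then show "\<exists>t'. T \<in> committed r t'" using committed_iff r by blast
  next
    fix r assume "T \<in> cancelled s t" and r: "r \<in> Correct"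
    then have "dec s t T = Some False" using cancelled_iff assms(2) by blast
    then obtain t' where "dec r t' T = Some False"
      using byblos_decision_propagates[OF assms r] by blast
    then show "\<exists>t'. T \<in> cancelled r t'" using cancelled_iff r by blast
  qed
qed

end
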